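(* Let $C(\mathbf{x})$ be a $\Sigma\Pi\Sigma$ circuit of formal degree $d$ and top fan-in $s$. Then for every $k$ and every partition of $\mathbf{x}$ into $\mathbf{y}$ and $\mathbf{z}$, $\Gamma^{\mathrm{SED}}_{k,0}(C)\le s\cdot 2^d$.
   Context: A $\Sigma\Pi\Sigma$ circuit computes $\sum_{i=1}^{s}\prod_{j=1}^{d_i}L_{i,j}$ with each $L_{i,j}$ an affine form; $s$ is its top fan-in and $\max_i d_i$ its formal degree. For a partition $\mathbf{x}=\mathbf{y}\sqcup\mathbf{z}$ with $|\mathbf{y}|=n_y$, $|\mathbf{z}|=n_z$, the shifted evaluation dimension of a polynomial $P$ is $\Gamma^{\mathrm{SED}}_{k,\ell}(P)=\dim \mathrm{Span}\{\mathrm{Eval}_{\{0,1\}^{n_z}}(m\cdot P(\mathbf{a},\mathbf{z})) : m$ a monomial of degree exactly $\ell$ in $\mathbf{z},\ \mathbf{a}\in\{0,1\}^{n_y}$ with at most $k$ ones$\}$, where $\mathrm{Eval}_{\{0,1\}^{n_z}}(f)$ is the vector of values of $f$ on $\{0,1\}^{n_z}$; $\Gamma^{\mathrm{SED}}_{k,0}(C)$ means this quantity for the polynomial computed by $C$. *)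

theory Defs
  imports Main "HOL-Analysis.Analysis" "HOL-Library.Function_Algebras"
begin

text \<open>Variables are x_0,...,x_{n-1} (indices i < n).  An affine form is a pair
(constant term, coefficient function); only the coefficients of indices i < n matter.\<close>

type_synonym 'a affine = "'a \<times> (nat \<Rightarrow> 'a)"

definition eval_affine :: "nat \<Rightarrow> 'a::field affine \<Rightarrow> (nat \<Rightarrow> 'a) \<Rightarrow> 'a" where
  "eval_affine n L x = fst L + (\<Sum>i<n. snd L i * x i)"

type_synonym 'a spscircuit = "'a affine list list"

definition eval_circuit :: "nat \<Rightarrow> 'a::field spscircuit \<Rightarrow> (nat \<Rightarrow> 'a) \<Rightarrow> 'a" where
  "eval_circuit n C x = (\<Sum>P\<leftarrow>C. \<Prod>L\<leftarrow>P. eval_affine n L x)"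

definition top_fanin :: "'a spscircuit \<Rightarrow> nat" where
  "top_fanin C = length C"

definition formal_degree :: "'a spscircuit \<Rightarrow> nat" where
  "formal_degree C = Max (insert 0 (set (map length C)))"

definition bool_pt :: "nat set \<Rightarrow> nat \<Rightarrow> 'a::field" where
  "bool_pt S = (\<lambda>i. if i \<in> S then 1 else 0)"

text \<open>A point of {0,1}^{n_z} is a subset B of the z-variables (its ones); the evaluation
vector Eval of a function is represented as the function B \<mapsto> value for B \<subseteq> Z
(and 0 elsewhere), an element of the vector space nat set \<Rightarrow> 'a.
Monomials of degree exactly l in z are exponent vectors e supported on Z with sum l.\<close>

definition SED :: "nat \<Rightarrow> nat set \<Rightarrow> nat \<Rightarrow> nat \<Rightarrow> ((nat \<Rightarrow> 'a::field) \<Rightarrow> 'a) \<Rightarrow> nat" where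
  "SED n Y k l P =
     (let Z = {..<n} - Y in
      vector_space.dim (\<lambda>(c::'a) (f::nat set \<Rightarrow> 'a) B. c * f B)
        {(\<lambda>B. if B \<subseteq> Z
               then (\<Prod>i\<in>Z. (bool_pt B i :: 'a) ^ e i) * P (bool_pt (A \<union> B))
               else 0)
         | A e. A \<subseteq> Y \<and> card A \<le> k \<and> (\<forall>i. i \<notin> Z \<longrightarrow> e i = 0) \<and> (\<Sum>i\<in>Z. e i) = l})"

end

theory Submission
  imports Defs
begin

text \<open>Fixing the y-variables to a 0/1 point A turns every affine form L into c + f(z), where
  the constant c depends on A but the linear part f in the z-variables does not. A product
  of d such forms therefore lies in the span of the 2^d products of subsets of the linear
  parts, a set independent of A; summing over the s products of the circuit, every evaluation
  vector lies in the span of at most s * 2^d fixed vectors.\<close>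

text \<open>The scalar multiplication is the one used in the definition of SED.\<close>

interpretation fv: vector_space "\<lambda>(c::'a::field) (f::'b \<Rightarrow> 'a) x. c * f x"
  by unfold_locales (auto simp: fun_eq_iff algebra_simps)

lemma span_times_image:
  assumes "h \<in> fv.span G"
  shows "(\<lambda>x. f x * h x) \<in> fv.span ((\<lambda>g x. (f x :: 'a::field) * g x) ` G)"
proof -
  let ?T = "fv.span ((\<lambda>g x. f x * g x) ` G)"
  have "fv.subspace {h. (\<lambda>x. f x * h x) \<in> ?T}"
  proof (rule fv.subspaceI)
    show "0 \<in> {h. (\<lambda>x. f x * h x) \<in> ?T}"
      using fv.span_zero by (simp add: zero_fun_def)
    show "h1 + h2 \<in> {h. (\<lambda>x. f x * h x) \<in> ?T}"
      if "h1 \<in> {h. (\<lambda>x. f x * h x) \<in> ?T}" "h2 \<in> {h. (\<lambda>x. f x * h x) \<in> ?T}" for h1 h2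
      using fv.span_add[OF that[simplified]] by (simp add: plus_fun_def distrib_left)
    show "(\<lambda>x. c * h1 x) \<in> {h. (\<lambda>x. f x * h x) \<in> ?T}"
      if "h1 \<in> {h. (\<lambda>x. f x * h x) \<in> ?T}" for c h1
      using fv.span_scale[OF that[simplified], of c] by (simp add: mult.left_commute)
  qed
  moreover have "(\<lambda>x. f x * g x) \<in> ?T" if "g \<in> G" for g
    using that by (intro fv.span_base imageI)
  ultimately show ?thesis
    using fv.span_induct[OF assms, of "\<lambda>h. (\<lambda>x. f x * h x) \<in> ?T"] by simp
qed

lemma sum_list_in_span:
  assumes "\<And>y. y \<in> set ys \<Longrightarrow> (\<lambda>x. f y x) \<in> fv.span S"
  shows "(\<lambda>x. \<Sum>y\<leftarrow>ys. f y x :: 'a::field) \<in> fv.span S"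
  using assms
proof (induction ys)
  case Nil
  then show ?case using fv.span_zero by (simp add: zero_fun_def)
next
  case (Cons y ys)
  then show ?case using fv.span_add[of "\<lambda>x. f y x"] by (simp add: plus_fun_def)
qed

fun subproducts :: "('b \<Rightarrow> 'a::field) \<Rightarrow> ('b \<Rightarrow> 'a) list \<Rightarrow> ('b \<Rightarrow> 'a) set" where
  "subproducts g [] = {g}"
| "subproducts g (f # fs) = subproducts g fs \<union> (\<lambda>h x. f x * h x) ` subproducts g fs"

lemma finite_subproducts: "finite (subproducts g fs)"
  by (induction fs) auto

lemma card_subproducts: "card (subproducts g fs) \<le> 2 ^ length fs"
proof (induction fs)
  case (Cons f fs)
  have "card (subproducts g (f # fs))
      \<le> card (subproducts g fs) + card ((\<lambda>h x. f x * h x) ` subproducts g fs)"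
    by (simp add: card_Un_le)
  also have "\<dots> \<le> 2 * card (subproducts g fs)"
    using card_image_le[OF finite_subproducts] by simp
  finally show ?case using Cons by simp
qed simp

lemma shifted_product_in_span_subproducts:
  "(\<lambda>x. g x * (\<Prod>(c, f)\<leftarrow>cfs. c + f x)) \<in> fv.span (subproducts g (map snd cfs))"
proof (induction cfs)
  case Nil
  then show ?case by (simp add: fv.span_base)
next
  case (Cons cf cfs)
  obtain c f where cf: "cf = (c, f)" by fastforce
  define h where "h = (\<lambda>x. g x * (\<Prod>(c, f)\<leftarrow>cfs. c + f x))"
  let ?G = "subproducts g (map snd (cf # cfs))"
  have "(\<lambda>x. c * h x) \<in> fv.span ?G"
    using fv.span_scale[OF Cons[folded h_def]] fv.span_mono[of _ ?G] by auto
  moreover have "(\<lambda>x. f x * h x) \<in> fv.span ?G"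
    using span_times_image[OF Cons[folded h_def], of f] fv.span_mono[of _ ?G] cf by auto
  ultimately have "(\<lambda>x. c * h x) + (\<lambda>x. f x * h x) \<in> fv.span ?G"
    by (rule fv.span_add)
  then show ?case
    unfolding h_def cf by (simp add: plus_fun_def algebra_simps)
qed

definition linear_part :: "nat \<Rightarrow> 'a::field affine \<Rightarrow> (nat \<Rightarrow> 'a) \<Rightarrow> 'a" where
  "linear_part n L x = (\<Sum>i<n. snd L i * x i)"

lemma eval_affine_add: "eval_affine n L (x + y) = eval_affine n L x + linear_part n L y"
  by (simp add: eval_affine_def linear_part_def distrib_left sum.distrib)

lemma bool_pt_Un: "A \<inter> B = {} \<Longrightarrow> (bool_pt (A \<union> B) :: nat \<Rightarrow> 'a::field) = bool_pt A + bool_pt B"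
  by (auto simp: bool_pt_def fun_eq_iff)

definition circuit_subproducts :: "nat \<Rightarrow> nat set \<Rightarrow> 'a::field spscircuit \<Rightarrow> (nat set \<Rightarrow> 'a) set" where
  "circuit_subproducts n Z C =
     (\<Union>P\<in>set C. subproducts (\<lambda>B. of_bool (B \<subseteq> Z))
                              (map (\<lambda>L B. linear_part n L (bool_pt B)) P))"

lemma finite_circuit_subproducts: "finite (circuit_subproducts n Z C)"
  by (simp add: circuit_subproducts_def finite_subproducts)

lemma card_circuit_subproducts:
  "card (circuit_subproducts n Z C) \<le> top_fanin C * 2 ^ formal_degree C"
proof -
  let ?sp = "\<lambda>P. subproducts (\<lambda>B. of_bool (B \<subseteq> Z))
                      (map (\<lambda>L B. linear_part n L (bool_pt B :: nat \<Rightarrow> 'a)) P)"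
  have "card (?sp P) \<le> 2 ^ formal_degree C" if "P \<in> set C" for P
  proof -
    have "length P \<le> formal_degree C"
      unfolding formal_degree_def using that by (intro Max_ge) auto
    then show ?thesis
      using card_subproducts[of _ "map _ P"] power_increasing[of _ _ "2::nat"]
      by (metis length_map one_le_numeral order_trans)
  qed
  then have "(\<Sum>P\<in>set C. card (?sp P)) \<le> card (set C) * 2 ^ formal_degree C"
    using sum_bounded_above[of "set C" "\<lambda>P. card (?sp P)"] by simp
  moreover have "card (circuit_subproducts n Z C) \<le> (\<Sum>P\<in>set C. card (?sp P))"
    unfolding circuit_subproducts_def by (rule card_UN_le) simp
  ultimately show ?thesis
    unfolding top_fanin_def by (meson card_length le_trans mult_le_mono1)
qed

lemma circuit_restriction_in_span:
  assumes "A \<subseteq> Y"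
  shows "(\<lambda>B. of_bool (B \<subseteq> {..<n} - Y) * eval_circuit n C (bool_pt (A \<union> B)))
     \<in> fv.span (circuit_subproducts n ({..<n} - Y) (C :: 'a::field spscircuit))"
proof -
  define Z where "Z = {..<n} - Y"
  let ?g = "\<lambda>B. of_bool (B \<subseteq> Z) :: 'a"
  let ?cfs = "\<lambda>P. map (\<lambda>L. (eval_affine n L (bool_pt A), \<lambda>B. linear_part n L (bool_pt B))) P"
  have split: "?g B * (\<Prod>L\<leftarrow>P. eval_affine n L (bool_pt (A \<union> B)))
      = ?g B * (\<Prod>(c, f)\<leftarrow>?cfs P. c + f B)" for P B
  proof (cases "B \<subseteq> Z")
    case True
    then have "A \<inter> B = {}" using assms unfolding Z_def by auto
    then show ?thesis by (simp add: bool_pt_Un eval_affine_add comp_def)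
  qed simp
  have "(\<lambda>B. ?g B * (\<Prod>L\<leftarrow>P. eval_affine n L (bool_pt (A \<union> B))))
      \<in> fv.span (circuit_subproducts n Z C)" if "P \<in> set C" for P
  proof -
    have "subproducts ?g (map snd (?cfs P)) \<subseteq> circuit_subproducts n Z C"
      using that unfolding circuit_subproducts_def by (auto simp: comp_def)
    then show ?thesis
      using shifted_product_in_span_subproducts[of ?g "?cfs P"] fv.span_mono
      unfolding split by blast
  qed
  then have "(\<lambda>B. \<Sum>P\<leftarrow>C. ?g B * (\<Prod>L\<leftarrow>P. eval_affine n L (bool_pt (A \<union> B))))
      \<in> fv.span (circuit_subproducts n Z C)"
    by (rule sum_list_in_span)
  then show ?thesis
    unfolding Z_def eval_circuit_def by (simp add: sum_list_const_mult)
qed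

theorem lemma6p2:
  fixes C :: "'a::field spscircuit" and n k :: nat and Y :: "nat set"
  assumes "Y \<subseteq> {..<n}"
  shows "SED n Y k 0 (eval_circuit n C) \<le> top_fanin C * 2 ^ formal_degree C"
proof -
  define Z where "Z = {..<n} - Y"
  let ?S = "{(\<lambda>B. if B \<subseteq> Z
               then (\<Prod>i\<in>Z. (bool_pt B i :: 'a) ^ e i) * eval_circuit n C (bool_pt (A \<union> B))
               else 0)
         | A e. A \<subseteq> Y \<and> card A \<le> k \<and> (\<forall>i. i \<notin> Z \<longrightarrow> e i = 0) \<and> (\<Sum>i\<in>Z. e i) = (0::nat)}"
  have "?S \<subseteq> fv.span (circuit_subproducts n Z C)"
  proof
    fix v assume "v \<in> ?S"
    then obtain A e where "A \<subseteq> Y" "(\<Sum>i\<in>Z. e i) = 0" and v: "v = (\<lambda>B. if B \<subseteq> Z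
         then (\<Prod>i\<in>Z. (bool_pt B i :: 'a) ^ e i) * eval_circuit n C (bool_pt (A \<union> B)) else 0)"
      by blast
    moreover have "finite Z" unfolding Z_def by simp
    ultimately have "v = (\<lambda>B. of_bool (B \<subseteq> Z) * eval_circuit n C (bool_pt (A \<union> B)))"
      by (auto simp: fun_eq_iff)
    then show "v \<in> fv.span (circuit_subproducts n Z C)"
      using circuit_restriction_in_span[OF \<open>A \<subseteq> Y\<close>] unfolding Z_def by simp
  qed
  then have "fv.dim ?S \<le> card (circuit_subproducts n Z C)"
    using fv.dim_le_card finite_circuit_subproducts by blast
  then show ?thesis
    using card_circuit_subproducts unfolding SED_def Z_def Let_def by (meson le_trans)
qed

end
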